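(* Let $T$ be an invertible operator in $\mathcal D(\mathcal P_n)$. Then $Z(Tf)\subset Z(f)+\Omega$ for every $f\in\mathcal P_n\setminus\{0\}$ and every circular domain $\Omega$ such that $Z(T\phi_k)\subset\Omega$ for all $k=1,\dots,n$.
   Context: Let $n\ge 1$ be an integer and $\mathcal P_n$ the complex vector space of polynomials in one complex variable of degree at most $n$; $\phi_k(z)=z^k/k!$. $D$ is differentiation on $\mathcal P_n$, $I$ the identity, and $\mathcal D(\mathcal P_n)$ the linear span of $I,D,\dots,D^n$. For a nonzero $f$, $Z(f)$ is the multiset of roots of $f$ (with multiplicity; empty for nonzero constants). For $A,B\subset\mathbb C$, $A+B=\{u+v:u\in A,v\in B\}$ (empty if $A$ is empty). A circular domain is an open or closed disk, the open or closed exterior of a disk, or an open or closed half-plane in $\mathbb C$. *)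

theory Defs
  imports "HOL-Analysis.Analysis" "HOL-Computational_Algebra.Polynomial"
begin

definition Pn :: "nat \<Rightarrow> complex poly set" where
  "Pn n = {f. degree f \<le> n}"

definition phi :: "nat \<Rightarrow> complex poly" where
  "phi k = monom (1 / of_nat (fact k)) k"

definition Dop :: "nat \<Rightarrow> (nat \<Rightarrow> complex) \<Rightarrow> complex poly \<Rightarrow> complex poly" where
  "Dop n a f = (\<Sum>j\<le>n. smult (a j) ((pderiv ^^ j) f))"

text \<open>Underlying set of the zero multiset Z(f).\<close>
definition Zs :: "complex poly \<Rightarrow> complex set" where
  "Zs f = {z. poly f z = 0}"

definition setsum_plus :: "complex set \<Rightarrow> complex set \<Rightarrow> complex set" where
  "setsum_plus A B = {u + v | u v. u \<in> A \<and> v \<in> B}"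

definition circular_domain :: "complex set \<Rightarrow> bool" where
  "circular_domain \<Omega> \<longleftrightarrow>
     (\<exists>c r. r > 0 \<and> (\<Omega> = ball c r \<or> \<Omega> = cball c r \<or>
                       \<Omega> = - cball c r \<or> \<Omega> = - ball c r)) \<or>
     (\<exists>a b. a \<noteq> 0 \<and> (\<Omega> = {z. Re (cnj a * z) > b} \<or> \<Omega> = {z. Re (cnj a * z) \<ge> b}))"

end

theory Submission
  imports Defs "HOL-Computational_Algebra.Fundamental_Theorem_Algebra"
begin

text \<open>
  Write \<open>T = \<Sum> a\<^sub>j D\<^sup>j\<close>; invertibility means \<open>a\<^sub>0 \<noteq> 0\<close>, so \<open>h = T \<phi>\<^sub>d\<close> has degree \<open>d = deg f\<close>.
  As \<open>h\<^sub>i = a\<^sub>d\<^sub>-\<^sub>i / i!\<close>, we have \<open>(T f)(\<zeta>) = \<Sum>\<^sub>i h\<^sub>i i! f\<^bsup>(d-i)\<^esup>(\<zeta>)\<close>, and factoring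
  \<open>h = c \<Prod>(z - r\<^sub>i)\<close> with all \<open>r\<^sub>i \<in> \<Omega>\<close> turns this pairing into \<open>c\<close> times the value at \<open>\<zeta>\<close>
  of the successive polar derivatives of \<open>f\<close> with respect to the points \<open>\<zeta> - r\<^sub>i\<close>.
  If \<open>\<zeta> \<notin> Z(f) + \<Omega>\<close>, all zeros of \<open>f\<close> lie in the circular region \<open>K = {u. \<zeta> - u \<notin> \<Omega>}\<close>,
  while no pole \<open>\<zeta> - r\<^sub>i\<close> does. By Laguerre's theorem every polar derivative again has
  all its zeros in \<open>K\<close>, so the final constant is non-zero and \<open>(T f)(\<zeta>) \<noteq> 0\<close>.
\<close>

section \<open>Circular regions\<close>

definition circle_fun :: "real \<Rightarrow> complex \<Rightarrow> real \<Rightarrow> complex \<Rightarrow> real" where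
  "circle_fun \<alpha> \<beta> \<gamma> z = \<alpha> * cmod z ^ 2 + Re (\<beta> * z) + \<gamma>"

definition above_zero :: "bool \<Rightarrow> real \<Rightarrow> bool" where
  "above_zero strict x \<longleftrightarrow> (if strict then 0 < x else 0 \<le> x)"

text \<open>
  \<open>\<alpha> < 0\<close> gives disks, \<open>\<alpha> = 0\<close> half-planes and \<open>\<alpha> > 0\<close> exteriors of disks. Unlike
  \<^const>\<open>circular_domain\<close>, this class is closed under complement, under \<open>z \<mapsto> \<zeta> - z\<close> and
  under inversion, which is what Laguerre's theorem needs.
\<close>
definition circle_region :: "bool \<Rightarrow> real \<Rightarrow> complex \<Rightarrow> real \<Rightarrow> complex set" where
  "circle_region strict \<alpha> \<beta> \<gamma> = {z. above_zero strict (circle_fun \<alpha> \<beta> \<gamma> z)}"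

lemma above_zero_nonneg: "above_zero s x \<Longrightarrow> 0 \<le> x"
  by (auto simp: above_zero_def split: if_splits)

lemma above_zero_mono: "above_zero s x \<Longrightarrow> x \<le> y \<Longrightarrow> above_zero s y"
  by (auto simp: above_zero_def split: if_splits)

lemma above_zero_mult_pos_iff: "0 < t \<Longrightarrow> above_zero s (x * t) \<longleftrightarrow> above_zero s x"
  by (auto simp: above_zero_def zero_less_mult_iff zero_le_mult_iff)

lemma not_above_zero_iff: "\<not> above_zero s x \<longleftrightarrow> above_zero (\<not> s) (- x)"
  by (auto simp: above_zero_def)

lemma circle_fun_center_radius:
  "circle_fun (-1) (2 * cnj c) (r\<^sup>2 - cmod c ^ 2) z = r\<^sup>2 - dist c z ^ 2"
  "circle_fun 1 (- (2 * cnj c)) (cmod c ^ 2 - r\<^sup>2) z = dist c z ^ 2 - r\<^sup>2"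
  unfolding circle_fun_def dist_norm cmod_power2 by (simp_all add: power2_eq_square algebra_simps)

lemma circular_domain_circle_region:
  assumes "circular_domain \<Omega>"
  obtains s \<alpha> \<beta> \<gamma> where "\<Omega> = circle_region s \<alpha> \<beta> \<gamma>"
proof -
  have le: "dist c z \<le> r \<longleftrightarrow> dist c z ^ 2 \<le> r\<^sup>2" "r \<le> dist c z \<longleftrightarrow> r\<^sup>2 \<le> dist c z ^ 2"
    if "0 < r" for c z :: complex and r :: real
    using abs_le_square_iff[of "dist c z" r] abs_le_square_iff[of r "dist c z"] that by simp_all
  have lt: "dist c z < r \<longleftrightarrow> dist c z ^ 2 < r\<^sup>2" "r < dist c z \<longleftrightarrow> r\<^sup>2 < dist c z ^ 2"
    if "0 < r" for c z :: complex and r :: real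
    using le[OF that, of c z] by (simp_all add: not_le[symmetric] del: not_le)
  have disks:
     "ball c r = circle_region True (-1) (2 * cnj c) (r\<^sup>2 - cmod c ^ 2)"
     "cball c r = circle_region False (-1) (2 * cnj c) (r\<^sup>2 - cmod c ^ 2)"
     "- cball c r = circle_region True 1 (- (2 * cnj c)) (cmod c ^ 2 - r\<^sup>2)"
     "- ball c r = circle_region False 1 (- (2 * cnj c)) (cmod c ^ 2 - r\<^sup>2)"
    if "0 < r" for c :: complex and r :: real
    using le[OF that] lt[OF that]
    by (auto simp: circle_region_def above_zero_def circle_fun_center_radius)
  have half_planes:
    "{z. b < Re (cnj a * z)} = circle_region True 0 (cnj a) (- b)"
    "{z. b \<le> Re (cnj a * z)} = circle_region False 0 (cnj a) (- b)" for a b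
    by (auto simp: circle_region_def above_zero_def circle_fun_def)
  from assms show thesis
    unfolding circular_domain_def using disks half_planes that by metis
qed

lemma diff_notin_circle_region_iff:
  "\<zeta> - u \<notin> circle_region s \<alpha> \<beta> \<gamma> \<longleftrightarrow>
     u \<in> circle_region (\<not> s) (- \<alpha>) (2 * of_real \<alpha> * cnj \<zeta> + \<beta>) (- circle_fun \<alpha> \<beta> \<gamma> \<zeta>)"
proof -
  have "- circle_fun \<alpha> \<beta> \<gamma> (\<zeta> - u) =
      circle_fun (- \<alpha>) (2 * of_real \<alpha> * cnj \<zeta> + \<beta>) (- circle_fun \<alpha> \<beta> \<gamma> \<zeta>) u"
    unfolding circle_fun_def cmod_power2 by (simp add: power2_eq_square algebra_simps)
  then show ?thesis
    unfolding circle_region_def by (simp add: not_above_zero_iff)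
qed

lemma circle_fun_inversion:
  assumes "w \<noteq> 0"
  shows "circle_fun \<alpha> \<beta> \<gamma> (z\<^sub>0 - 1 / w) * cmod w ^ 2 =
    circle_fun (circle_fun \<alpha> \<beta> \<gamma> z\<^sub>0) (- (2 * of_real \<alpha> * z\<^sub>0 + cnj \<beta>)) \<alpha> w"
proof -
  obtain x y where w: "w = Complex x y" by (cases w)
  obtain a b where z: "z\<^sub>0 = Complex a b" by (cases z\<^sub>0)
  obtain c d where \<beta>: "\<beta> = Complex c d" by (cases \<beta>)
  define N where "N = x * x + y * y"
  have N: "N \<noteq> 0"
    using assms w by (auto simp: N_def complex_eq_iff sum_power2_eq_zero_iff simp flip: power2_eq_square)
  have inv: "1 / w = Complex (x / N) (- y / N)" and norm: "cmod w ^ 2 = N"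
    using N w unfolding cmod_power2
    by (simp_all add: complex_eq_iff Re_divide Im_divide N_def power2_eq_square)
  show ?thesis
    unfolding circle_fun_def inv norm unfolding cmod_power2 using z \<beta> w N
    by (simp add: field_simps power2_eq_square) (simp add: N_def algebra_simps)
qed

lemma circle_fun_mean_ge:
  fixes p :: "nat \<Rightarrow> complex"
  assumes "\<alpha> \<le> 0" and "0 < m"
  shows "(\<Sum>j<m. circle_fun \<alpha> \<beta> \<gamma> (p j)) / m \<le> circle_fun \<alpha> \<beta> \<gamma> ((\<Sum>j<m. p j) / of_nat m)"
proof -
  let ?S = "\<Sum>j<m. p j" and ?N = "\<Sum>j<m. cmod (p j) ^ 2"
  have "cmod ?S ^ 2 \<le> (\<Sum>j<m. cmod (p j)) ^ 2"
    by (simp add: norm_sum power_mono)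
  also have "\<dots> \<le> m * ?N"
    using sum_squared_le_sum_of_squares[of "\<lambda>j. cmod (p j)" "{..<m}"] by (simp add: mult.commute)
  finally have "\<alpha> * (m * ?N) \<le> \<alpha> * cmod ?S ^ 2"
    using assms(1) by (rule mult_left_mono_neg)
  then have quadratic: "\<alpha> * ?N / m \<le> \<alpha> * cmod ?S ^ 2 / m\<^sup>2"
    using assms(2) by (simp add: field_simps power2_eq_square)
  have "(\<Sum>j<m. circle_fun \<alpha> \<beta> \<gamma> (p j)) / m = \<alpha> * ?N / m + Re (\<beta> * ?S) / m + \<gamma>"
    using assms(2) by (simp add: circle_fun_def sum.distrib sum_distrib_left Re_sum add_divide_distrib)
  moreover have "Re (\<beta> * (?S / of_nat m)) = Re (\<beta> * ?S) / m"
    by (simp only: times_divide_eq_right Re_divide_of_nat)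
  then have "circle_fun \<alpha> \<beta> \<gamma> (?S / of_nat m) = \<alpha> * cmod ?S ^ 2 / m\<^sup>2 + Re (\<beta> * ?S) / m + \<gamma>"
    by (simp add: circle_fun_def norm_divide power_divide)
  ultimately show ?thesis
    using quadratic by linarith
qed

lemma mean_in_circle_region:
  fixes p :: "nat \<Rightarrow> complex"
  assumes "\<alpha> \<le> 0" and "0 < k" and "k \<le> m"
    and "\<forall>j<k. p j \<in> circle_region s \<alpha> \<beta> \<gamma>"
    and "\<forall>j<m. 0 \<le> circle_fun \<alpha> \<beta> \<gamma> (p j)"
  shows "(\<Sum>j<m. p j) / of_nat m \<in> circle_region s \<alpha> \<beta> \<gamma>"
proof -
  have "circle_fun \<alpha> \<beta> \<gamma> (p 0) \<le> (\<Sum>j<m. circle_fun \<alpha> \<beta> \<gamma> (p j))"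
    using assms by (intro member_le_sum) auto
  moreover have "above_zero s (circle_fun \<alpha> \<beta> \<gamma> (p 0))"
    using assms by (auto simp: circle_region_def)
  ultimately have "above_zero s ((\<Sum>j<m. circle_fun \<alpha> \<beta> \<gamma> (p j)) * (1 / m))"
    using assms(2,3) by (subst above_zero_mult_pos_iff) (auto intro: above_zero_mono)
  then show ?thesis
    using circle_fun_mean_ge[OF assms(1), of m] assms(2,3)
    by (auto simp: circle_region_def intro: above_zero_mono)
qed

lemma inversion_mem_circle_region_iff:
  assumes "u \<noteq> 0"
  shows "u \<in> circle_region s (circle_fun \<alpha> \<beta> \<gamma> w) (- (2 * of_real \<alpha> * w + cnj \<beta>)) \<alpha>
    \<longleftrightarrow> w - 1 / u \<in> circle_region s \<alpha> \<beta> \<gamma>"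
  using assms circle_fun_inversion[OF assms, of \<alpha> \<beta> \<gamma> w, symmetric]
  by (simp add: circle_region_def above_zero_mult_pos_iff)

section \<open>Polar derivatives and Laguerre's theorem\<close>

text \<open>The polar derivative of \<open>f\<close>, regarded as a polynomial of formal degree \<open>m\<close>.\<close>
definition polar_deriv :: "nat \<Rightarrow> 'a::idom \<Rightarrow> 'a poly \<Rightarrow> 'a poly" where
  "polar_deriv m c f = smult (of_nat m) f + [:c, -1:] * pderiv f"

lemma poly_polar_deriv:
  "poly (polar_deriv m c f) z = of_nat m * poly f z + (c - z) * poly (pderiv f) z"
  by (simp add: polar_deriv_def algebra_simps)

lemma coeff_polar_deriv:
  "coeff (polar_deriv m c f) i =
     of_nat m * coeff f i + c * of_nat (Suc i) * coeff f (Suc i) - of_nat i * coeff f i"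
  by (cases i) (simp_all add: polar_deriv_def coeff_pderiv coeff_pCons algebra_simps)

lemma degree_polar_deriv_le:
  assumes "degree f \<le> m"
  shows "degree (polar_deriv m c f) \<le> m - 1"
proof (rule degree_le, intro allI impI)
  fix i assume "m - 1 < i"
  then have "coeff f (Suc i) = 0"
    using assms by (auto intro: coeff_eq_0)
  moreover have "of_nat m * coeff f i = of_nat i * coeff f i"
    using assms \<open>m - 1 < i\<close> by (cases "i = m") (auto intro: coeff_eq_0)
  ultimately show "coeff (polar_deriv m c f) i = 0"
    by (simp add: coeff_polar_deriv)
qed

lemma higher_pderiv_polar_deriv:
  "(pderiv ^^ k) (polar_deriv m c f) =
     smult (of_nat m - of_nat k) ((pderiv ^^ k) f) + [:c, -1:] * (pderiv ^^ Suc k) f"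
proof (induction k)
  case 0
  then show ?case by (simp add: polar_deriv_def)
next
  case (Suc k)
  have "(pderiv ^^ Suc k) (polar_deriv m c f) = pderiv ((pderiv ^^ k) (polar_deriv m c f))"
    by simp
  also have "\<dots> = smult (of_nat m - of_nat k) ((pderiv ^^ Suc k) f)
      + ([:c, -1:] * (pderiv ^^ Suc (Suc k)) f - (pderiv ^^ Suc k) f)"
    unfolding Suc.IH by (simp add: pderiv_add pderiv_smult pderiv_mult pderiv_pCons pderiv_minus)
  also have "\<dots> = smult (of_nat m - of_nat (Suc k)) ((pderiv ^^ Suc k) f)
      + [:c, -1:] * (pderiv ^^ Suc (Suc k)) f"
    by (simp add: algebra_simps smult_diff_left smult_add_left)
  finally show ?case .
qed

lemma poly_pderiv_prod_linear:
  fixes z :: "nat \<Rightarrow> 'a::field"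
  assumes "\<forall>i<k. x \<noteq> z i"
  shows "poly (pderiv (\<Prod>i<k. [:- z i, 1:])) x =
    poly (\<Prod>i<k. [:- z i, 1:]) x * (\<Sum>i<k. 1 / (x - z i))"
proof -
  have "poly (pderiv (\<Prod>i<k. [:- z i, 1:])) x = (\<Sum>j<k. \<Prod>i\<in>{..<k} - {j}. x - z i)"
    by (simp add: pderiv_prod pderiv_pCons poly_sum poly_prod)
  also have "\<dots> = (\<Sum>j<k. (\<Prod>i<k. x - z i) / (x - z j))"
    using assms by (intro sum.cong refl) (simp add: prod_diff1)
  finally show ?thesis
    by (simp add: poly_prod sum_distrib_left)
qed

lemma degree_prod_linear: "degree (\<Prod>i<k. [:- z i, 1 :: 'a::idom:]) = k"
  by (subst degree_prod_sum_eq) auto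

lemma coeff_prod_linear_next_to_lead:
  fixes z :: "nat \<Rightarrow> 'a::idom"
  shows "coeff (\<Prod>i<Suc k. [:- z i, 1:]) k = - (\<Sum>i<Suc k. z i)"
proof (induction k)
  case 0
  then show ?case by simp
next
  case (Suc k)
  define P where "P = (\<Prod>i<Suc k. [:- z i, 1:])"
  have "lead_coeff P = 1"
    unfolding P_def lead_coeff_prod by simp
  then have lead: "coeff P (Suc k) = 1"
    using degree_prod_linear[of z "Suc k"] by (simp add: P_def)
  have "(\<Prod>i<Suc (Suc k). [:- z i, 1:]) = [:- z (Suc k), 1:] * P"
    by (simp add: P_def mult.commute)
  moreover have "coeff P k = - (\<Sum>i<Suc k. z i)"
    using Suc.IH by (simp add: P_def)
  ultimately show ?case
    using lead by (simp add: coeff_pCons)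
qed

lemma polar_deriv_root_centroid:
  fixes z :: "nat \<Rightarrow> 'a::field_char_0"
  assumes "1 \<le> m" and "A \<noteq> 0" and "\<forall>i<k. w \<noteq> z i"
    and "poly (polar_deriv m c (smult A (\<Prod>i<k. [:- z i, 1:]))) w = 0"
  shows "w \<noteq> c" and "1 / (w - c) = (\<Sum>i<k. 1 / (w - z i)) / of_nat m"
proof -
  let ?P = "\<Prod>i<k. [:- z i, 1:]" and ?S = "\<Sum>i<k. 1 / (w - z i)"
  have "poly ?P w \<noteq> 0"
    using assms(3) by (simp add: poly_prod)
  moreover have "A * poly ?P w * (of_nat m + (c - w) * ?S) = 0"
    using assms(4) poly_pderiv_prod_linear[OF assms(3)]
    by (simp add: poly_polar_deriv pderiv_smult algebra_simps)
  ultimately have centroid: "of_nat m + (c - w) * ?S = 0"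
    using assms(2) by simp
  then show "w \<noteq> c"
    using assms(1) by auto
  with centroid show "1 / (w - c) = ?S / of_nat m"
    using assms(1) by (simp add: field_simps)
qed

text \<open>
  The inversion \<open>u \<mapsto> w - 1 / u\<close> about a point \<open>w \<notin> K\<close> pulls \<open>K\<close> back to a region bounded
  by a concave quadratic, which therefore contains the centroid of the inverted points. Padding
  with \<open>m - k\<close> zeros (the zeros at infinity of \<open>f\<close>) is harmless exactly when \<open>\<alpha> \<ge> 0\<close>.
\<close>
lemma inverse_centroid_mem_circle_region:
  fixes z :: "nat \<Rightarrow> complex"
  assumes "k \<le> m" and "0 \<le> \<alpha> \<or> k = m"
    and z_in: "\<forall>i<k. z i \<in> circle_region s \<alpha> \<beta> \<gamma>"
    and w_out: "w \<notin> circle_region s \<alpha> \<beta> \<gamma>"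
    and "(\<Sum>i<k. 1 / (w - z i)) \<noteq> 0"
  shows "w - of_nat m / (\<Sum>i<k. 1 / (w - z i)) \<in> circle_region s \<alpha> \<beta> \<gamma>"
proof -
  define F where "F = circle_region s (circle_fun \<alpha> \<beta> \<gamma> w) (- (2 * of_real \<alpha> * w + cnj \<beta>)) \<alpha>"
  define p where "p j = (if j < k then 1 / (w - z j) else 0)" for j
  have "(\<Sum>j<m. p j) = (\<Sum>i<k. 1 / (w - z i))"
    using assms(1) by (subst sum.mono_neutral_right[of "{..<m}" "{..<k}"]) (auto simp: p_def)
  moreover have "0 < k" and "0 < m"
    using assms(1,5) by (auto intro: gr0I)
  moreover have "circle_fun \<alpha> \<beta> \<gamma> w \<le> 0"
    using w_out above_zero_nonneg[of "\<not> s"] by (force simp: circle_region_def not_above_zero_iff)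
  moreover have p_in: "p j \<in> F" if "j < k" for j
  proof -
    have "p j \<noteq> 0" and "w - 1 / p j = z j"
      using that z_in w_out by (auto simp: p_def)
    then show ?thesis
      using z_in that inversion_mem_circle_region_iff[of "p j" s \<alpha> \<beta> \<gamma> w] by (simp add: F_def)
  qed
  moreover have "0 \<le> circle_fun (circle_fun \<alpha> \<beta> \<gamma> w) (- (2 * of_real \<alpha> * w + cnj \<beta>)) \<alpha> (p j)"
    if "j < m" for j
  proof (cases "j < k")
    case True
    then show ?thesis
      using p_in by (auto simp: F_def circle_region_def intro: above_zero_nonneg)
  next
    case False
    then show ?thesis
      using assms(2) that by (simp add: p_def circle_fun_def)
  qed
  ultimately have "(\<Sum>i<k. 1 / (w - z i)) / of_nat m \<in> F"
    using mean_in_circle_region[of _ k m p] assms(1) by (auto simp: F_def)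
  then show ?thesis
    using assms(5) \<open>0 < m\<close>
      inversion_mem_circle_region_iff[of "(\<Sum>i<k. 1 / (w - z i)) / of_nat m" s \<alpha> \<beta> \<gamma> w]
    by (simp add: F_def)
qed

lemma laguerre_polar_deriv_root:
  fixes f :: "complex poly"
  assumes "1 \<le> m" and "degree f \<le> m" and "0 \<le> \<alpha> \<or> degree f = m"
    and roots: "\<forall>z. poly f z = 0 \<longrightarrow> z \<in> circle_region s \<alpha> \<beta> \<gamma>"
    and c: "c \<notin> circle_region s \<alpha> \<beta> \<gamma>"
    and w: "poly (polar_deriv m c f) w = 0"
  shows "w \<in> circle_region s \<alpha> \<beta> \<gamma>"
proof (rule ccontr)
  assume w_out: "w \<notin> circle_region s \<alpha> \<beta> \<gamma>"
  obtain z where f: "smult (lead_coeff f) (\<Prod>i<degree f. [:- z i, 1:]) = f"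
    using complex_poly_decompose' by blast
  have "lead_coeff f \<noteq> 0"
    using roots c by auto
  have "poly f x = lead_coeff f * (\<Prod>i<degree f. x - z i)" for x
    using arg_cong[where f = "\<lambda>p. poly p x", OF f] by (simp add: poly_prod)
  then have z_in: "\<forall>i<degree f. z i \<in> circle_region s \<alpha> \<beta> \<gamma>"
    using roots by auto
  then have "\<forall>i<degree f. w \<noteq> z i"
    using w_out by blast
  note centroid = polar_deriv_root_centroid[OF assms(1) \<open>lead_coeff f \<noteq> 0\<close> this, unfolded f, OF w]
  then have "(\<Sum>i<degree f. 1 / (w - z i)) \<noteq> 0"
    by auto
  moreover from this have "w - of_nat m / (\<Sum>i<degree f. 1 / (w - z i)) = c"
    using centroid assms(1) by (auto simp: field_simps)
  ultimately show False
    using inverse_centroid_mem_circle_region[OF assms(2,3) z_in w_out] c by simp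
qed

text \<open>
  The coefficient of \<open>z\<^bsup>m-1\<^esup>\<close> vanishes only if \<open>c\<close> is the centroid of the zeros, which lies in
  the convex region \<open>K\<close>.
\<close>
lemma degree_polar_deriv_eq:
  fixes f :: "complex poly"
  assumes "1 \<le> m" and "\<alpha> \<le> 0" and "degree f = m"
    and roots: "\<forall>z. poly f z = 0 \<longrightarrow> z \<in> circle_region s \<alpha> \<beta> \<gamma>"
    and c: "c \<notin> circle_region s \<alpha> \<beta> \<gamma>"
  shows "degree (polar_deriv m c f) = m - 1"
proof -
  obtain z where f: "smult (lead_coeff f) (\<Prod>i<m. [:- z i, 1:]) = f"
    using complex_poly_decompose' assms(3) by metis
  obtain m' where m': "m = Suc m'"
    using assms(1) by (cases m) auto
  have "f \<noteq> 0"
    using roots c by auto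
  have "poly f x = lead_coeff f * (\<Prod>i<m. x - z i)" for x
    using arg_cong[where f = "\<lambda>p. poly p x", OF f] by (simp add: poly_prod)
  then have z_in: "\<forall>i<m. z i \<in> circle_region s \<alpha> \<beta> \<gamma>"
    using roots by auto
  have "coeff f m' = lead_coeff f * coeff (\<Prod>i<m. [:- z i, 1:]) m'"
    by (metis coeff_smult f)
  also have "\<dots> = - lead_coeff f * (\<Sum>i<m. z i)"
    unfolding m' coeff_prod_linear_next_to_lead by (simp add: algebra_simps)
  finally have "coeff f m' = - lead_coeff f * (\<Sum>i<m. z i)" .
  moreover have "coeff (polar_deriv m c f) m' = of_nat m * c * lead_coeff f + coeff f m'"
    using assms(3) m' by (simp add: coeff_polar_deriv algebra_simps)
  ultimately have "coeff (polar_deriv m c f) m' = lead_coeff f * (of_nat m * c - (\<Sum>i<m. z i))"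
    by (simp add: algebra_simps)
  moreover have "c \<noteq> (\<Sum>i<m. z i) / of_nat m"
    using mean_in_circle_region[OF assms(2), of m m z s \<beta> \<gamma>] z_in assms(1) c
    by (auto simp: circle_region_def intro: above_zero_nonneg)
  ultimately have "coeff (polar_deriv m c f) m' \<noteq> 0"
    using \<open>f \<noteq> 0\<close> assms(1) by (auto simp: field_simps)
  then show ?thesis
    using le_degree degree_polar_deriv_le[of f m c] assms(3) m' by fastforce
qed

primrec iter_polar_deriv :: "'a::idom \<Rightarrow> (nat \<Rightarrow> 'a) \<Rightarrow> nat \<Rightarrow> 'a poly \<Rightarrow> 'a poly" where
  "iter_polar_deriv \<zeta> r 0 f = f"
| "iter_polar_deriv \<zeta> r (Suc m) f = iter_polar_deriv \<zeta> r m (polar_deriv (Suc m) (\<zeta> - r m) f)"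

lemma poly_iter_polar_deriv_nonzero:
  fixes f :: "complex poly"
  assumes "f \<noteq> 0" and "degree f \<le> m" and "0 \<le> \<alpha> \<or> degree f = m"
    and "\<forall>z. poly f z = 0 \<longrightarrow> z \<in> circle_region s \<alpha> \<beta> \<gamma>"
    and "\<forall>i<m. \<zeta> - r i \<notin> circle_region s \<alpha> \<beta> \<gamma>"
  shows "poly (iter_polar_deriv \<zeta> r m f) \<zeta> \<noteq> 0"
  using assms
proof (induction m arbitrary: f)
  case 0
  then show ?case
    by (auto elim: degree_eq_zeroE)
next
  case (Suc m)
  let ?g = "polar_deriv (Suc m) (\<zeta> - r m) f"
  have "poly ?g (\<zeta> - r m) = of_nat (Suc m) * poly f (\<zeta> - r m)"
    by (simp add: poly_polar_deriv)
  moreover have "poly f (\<zeta> - r m) \<noteq> 0"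
    using Suc.prems(4,5) by auto
  ultimately have "?g \<noteq> 0"
    by (metis mult_eq_0_iff of_nat_eq_0_iff nat.distinct(1) poly_0)
  moreover have "\<forall>z. poly ?g z = 0 \<longrightarrow> z \<in> circle_region s \<alpha> \<beta> \<gamma>"
    using Suc.prems laguerre_polar_deriv_root[of "Suc m" f \<alpha> s \<beta> \<gamma> "\<zeta> - r m"] by auto
  moreover have "degree ?g \<le> m"
    using Suc.prems degree_polar_deriv_le[of f "Suc m"] by simp
  moreover have "0 \<le> \<alpha> \<or> degree ?g = m"
  proof (cases "0 \<le> \<alpha>")
    case False
    then show ?thesis
      using Suc.prems degree_polar_deriv_eq[of "Suc m" \<alpha> f s \<beta> \<gamma> "\<zeta> - r m"] by simp
  qed simp
  ultimately show ?case
    using Suc.IH Suc.prems(5) by simp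
qed

section \<open>The apolar form\<close>

text \<open>
  \<open>\<Sum>\<^sub>j h\<^sub>j j! f\<^bsup>(m-j)\<^esup>(\<zeta>)\<close>: for \<open>h = T \<phi>\<^sub>m\<close> and \<open>deg f = m\<close> this is \<open>(T f)(\<zeta>)\<close>, and every linear
  factor of \<open>h\<close> can be traded for a polar derivative of \<open>f\<close>.
\<close>
definition apolar_form :: "nat \<Rightarrow> 'a::{idom,semiring_char_0} poly \<Rightarrow> 'a poly \<Rightarrow> 'a \<Rightarrow> 'a" where
  "apolar_form m h f \<zeta> = (\<Sum>j\<le>m. coeff h j * fact j * poly ((pderiv ^^ (m - j)) f) \<zeta>)"

lemma apolar_form_smult: "apolar_form m (smult A h) f \<zeta> = A * apolar_form m h f \<zeta>"
  by (simp add: apolar_form_def sum_distrib_left algebra_simps)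

lemma apolar_form_linear_factor:
  fixes h :: "'a::{idom,semiring_char_0} poly"
  assumes "degree h \<le> m"
  shows "apolar_form (Suc m) ([:- w, 1:] * h) f \<zeta> = apolar_form m h (polar_deriv (Suc m) (\<zeta> - w) f) \<zeta>"
proof -
  define F where "F k = poly ((pderiv ^^ k) f) \<zeta>" for k
  have "coeff ([:- w, 1:] * h) j = - w * coeff h j + (if j = 0 then 0 else coeff h (j - 1))" for j
    by (cases j) (simp_all add: coeff_pCons)
  then have "apolar_form (Suc m) ([:- w, 1:] * h) f \<zeta> =
      (\<Sum>j\<le>Suc m. - w * coeff h j * fact j * F (Suc m - j)) +
      (\<Sum>j\<le>Suc m. (if j = 0 then 0 else coeff h (j - 1)) * fact j * F (Suc m - j))"
    unfolding apolar_form_def F_def sum.distrib[symmetric] by (simp add: algebra_simps)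
  also have "(\<Sum>j\<le>Suc m. - w * coeff h j * fact j * F (Suc m - j)) =
      (\<Sum>j\<le>m. - w * coeff h j * fact j * F (Suc m - j))"
    using assms by (simp add: coeff_eq_0)
  also have "(\<Sum>j\<le>Suc m. (if j = 0 then 0 else coeff h (j - 1)) * fact j * F (Suc m - j)) =
      (\<Sum>j\<le>m. coeff h j * fact (Suc j) * F (m - j))"
    by (subst sum.atMost_Suc_shift) simp
  also have "(\<Sum>j\<le>m. - w * coeff h j * fact j * F (Suc m - j)) + \<dots> =
      (\<Sum>j\<le>m. coeff h j * fact j * ((of_nat (Suc m) - of_nat (m - j)) * F (m - j) + (\<zeta> - w - \<zeta>) * F (Suc (m - j))))"
    unfolding sum.distrib[symmetric]
  proof (intro sum.cong refl)
    fix j assume "j \<in> {..m}"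
    then have "of_nat (Suc m) - of_nat (m - j) = (of_nat (Suc j) :: 'a)" and "Suc (m - j) = Suc m - j"
      by (simp_all add: of_nat_diff)
    then show "- w * coeff h j * fact j * F (Suc m - j) + coeff h j * fact (Suc j) * F (m - j) =
        coeff h j * fact j * ((of_nat (Suc m) - of_nat (m - j)) * F (m - j) + (\<zeta> - w - \<zeta>) * F (Suc (m - j)))"
      by (simp add: algebra_simps)
  qed
  also have "\<dots> = apolar_form m h (polar_deriv (Suc m) (\<zeta> - w) f) \<zeta>"
    by (simp add: apolar_form_def higher_pderiv_polar_deriv F_def algebra_simps)
  finally show ?thesis .
qed

lemma apolar_form_prod_linear:
  fixes f :: "'a::{idom,semiring_char_0} poly"
  assumes "degree f \<le> m"
  shows "apolar_form m (\<Prod>i<m. [:- r i, 1:]) f \<zeta> = poly (iter_polar_deriv \<zeta> r m f) \<zeta>"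
  using assms
proof (induction m arbitrary: f)
  case 0
  then show ?case by (simp add: apolar_form_def)
next
  case (Suc m)
  have "(\<Prod>i<Suc m. [:- r i, 1:]) = [:- r m, 1:] * (\<Prod>i<m. [:- r i, 1:])"
    by (simp add: mult.commute)
  then have "apolar_form (Suc m) (\<Prod>i<Suc m. [:- r i, 1:]) f \<zeta> =
      apolar_form m (\<Prod>i<m. [:- r i, 1:]) (polar_deriv (Suc m) (\<zeta> - r m) f) \<zeta>"
    by (simp only: apolar_form_linear_factor degree_prod_linear order_refl)
  also have "\<dots> = poly (iter_polar_deriv \<zeta> r (Suc m) f) \<zeta>"
    using Suc.IH degree_polar_deriv_le[OF Suc.prems] by simp
  finally show ?case .
qed

lemma apolar_form_nonzero:
  fixes f H :: "complex poly"
  assumes "circular_domain \<Omega>"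
    and "H \<noteq> 0" and "degree H = d" and "\<forall>z. poly H z = 0 \<longrightarrow> z \<in> \<Omega>"
    and "f \<noteq> 0" and "degree f = d" and "\<forall>u. poly f u = 0 \<longrightarrow> \<zeta> - u \<notin> \<Omega>"
  shows "apolar_form d H f \<zeta> \<noteq> 0"
proof -
  obtain r where H: "smult (lead_coeff H) (\<Prod>i<d. [:- r i, 1:]) = H"
    using complex_poly_decompose' assms(3) by metis
  have "poly H x = lead_coeff H * (\<Prod>i<d. x - r i)" for x
    using arg_cong[where f = "\<lambda>p. poly p x", OF H] by (simp add: poly_prod)
  then have r_in: "\<forall>i<d. r i \<in> \<Omega>"
    using assms(4) by auto
  obtain s \<alpha> \<beta> \<gamma> where \<Omega>: "\<Omega> = circle_region s \<alpha> \<beta> \<gamma>"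
    using circular_domain_circle_region[OF assms(1)] .
  let ?K = "circle_region (\<not> s) (- \<alpha>) (2 * of_real \<alpha> * cnj \<zeta> + \<beta>) (- circle_fun \<alpha> \<beta> \<gamma> \<zeta>)"
  have "poly (iter_polar_deriv \<zeta> r d f) \<zeta> \<noteq> 0"
  proof (rule poly_iter_polar_deriv_nonzero)
    show "\<forall>z. poly f z = 0 \<longrightarrow> z \<in> ?K"
      using assms(7) by (simp add: \<Omega> diff_notin_circle_region_iff)
    show "\<forall>i<d. \<zeta> - r i \<notin> ?K"
      using r_in diff_notin_circle_region_iff[of \<zeta> "\<zeta> - r i" s \<alpha> \<beta> \<gamma> for i] by (auto simp: \<Omega>)
  qed (use assms in auto)
  moreover have "apolar_form d H f \<zeta> = lead_coeff H * poly (iter_polar_deriv \<zeta> r d f) \<zeta>"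
    using apolar_form_smult apolar_form_prod_linear[of f d r \<zeta>] assms(6) H by (metis order_refl)
  ultimately show ?thesis
    using assms(2) by simp
qed

section \<open>Differential operators on \<open>P\<^sub>n\<close>\<close>

lemma higher_pderiv_beyond_degree:
  fixes f :: "'a::{idom,semiring_char_0} poly"
  assumes "degree f < j"
  shows "(pderiv ^^ j) f = 0"
proof -
  obtain i where "j = Suc i"
    using assms by (cases j) auto
  moreover have "degree ((pderiv ^^ i) f) = 0"
    using assms \<open>j = Suc i\<close> by (simp add: degree_higher_pderiv)
  ultimately show ?thesis
    by (simp add: pderiv_eq_0_iff)
qed

lemma higher_pderiv_phi: "(pderiv ^^ j) (phi d) = (if j \<le> d then phi (d - j) else 0)"
proof (induction j)
  case 0
  then show ?case by simp
next
  case (Suc j)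
  have "(of_nat (Suc k) :: complex) * (1 / of_nat (fact (Suc k))) = 1 / of_nat (fact k)" for k
    by (simp only: fact_Suc of_nat_mult) (simp del: of_nat_Suc add: divide_simps)
  then have "pderiv (phi (Suc k)) = phi k" for k
    unfolding phi_def pderiv_monom by simp
  moreover have "pderiv (phi 0) = 0"
    by (simp add: phi_def pderiv_monom)
  moreover have "d - j = Suc (d - Suc j)" if "Suc j \<le> d"
    using that by simp
  ultimately show ?case
    using Suc.IH by (auto simp: le_Suc_eq)
qed

lemma coeff_Dop_phi:
  assumes "d \<le> n"
  shows "coeff (Dop n a (phi d)) i = (if i \<le> d then a (d - i) / fact i else 0)"
proof -
  have "coeff (Dop n a (phi d)) i = (\<Sum>j\<le>n. if j = d - i then (if i \<le> d then a j / fact i else 0) else 0)"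
    unfolding Dop_def coeff_sum coeff_smult higher_pderiv_phi
    by (intro sum.cong refl) (auto simp: phi_def coeff_monom)
  also have "\<dots> = (if i \<le> d then a (d - i) / fact i else 0)"
    using assms by (subst sum.delta) auto
  finally show ?thesis .
qed

lemma Dop_phi_nonzero_degree:
  assumes "a 0 \<noteq> 0" and "d \<le> n"
  shows "Dop n a (phi d) \<noteq> 0" and "degree (Dop n a (phi d)) = d"
proof -
  have "coeff (Dop n a (phi d)) d \<noteq> 0"
    using assms by (simp add: coeff_Dop_phi)
  then show "Dop n a (phi d) \<noteq> 0"
    by auto
  show "degree (Dop n a (phi d)) = d"
    using \<open>coeff (Dop n a (phi d)) d \<noteq> 0\<close> assms(2)
    by (intro antisym degree_le le_degree) (auto simp: coeff_Dop_phi)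
qed

lemma poly_Dop:
  assumes "degree f \<le> n"
  shows "poly (Dop n a f) z = (\<Sum>j\<le>degree f. a j * poly ((pderiv ^^ j) f) z)"
proof -
  have "poly (Dop n a f) z = (\<Sum>j\<le>n. a j * poly ((pderiv ^^ j) f) z)"
    by (simp add: Dop_def poly_sum)
  also have "\<dots> = (\<Sum>j\<le>degree f. a j * poly ((pderiv ^^ j) f) z)"
    using assms by (intro sum.mono_neutral_right) (auto simp: higher_pderiv_beyond_degree)
  finally show ?thesis .
qed

lemma apolar_form_Dop_phi:
  assumes "degree f = d" and "d \<le> n"
  shows "apolar_form d (Dop n a (phi d)) f z = poly (Dop n a f) z"
proof -
  define g where "g i = a i * poly ((pderiv ^^ i) f) z" for i
  have "apolar_form d (Dop n a (phi d)) f z = (\<Sum>j\<le>d. g (d - j))"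
    unfolding apolar_form_def g_def by (intro sum.cong refl) (auto simp: coeff_Dop_phi[OF assms(2)])
  also have "\<dots> = (\<Sum>j<Suc d. g (Suc d - Suc j))"
    by (simp add: lessThan_Suc_atMost)
  also have "\<dots> = (\<Sum>j<Suc d. g j)"
    by (rule sum.nat_diff_reindex)
  also have "\<dots> = poly (Dop n a f) z"
    using poly_Dop[of f n a z] assms by (simp add: g_def lessThan_Suc_atMost)
  finally show ?thesis .
qed

lemma inj_on_Dop_imp_nonzero_0:
  assumes "inj_on (Dop n a) (Pn n)"
  shows "a 0 \<noteq> 0"
proof
  assume "a 0 = 0"
  have "Dop n a 1 = (\<Sum>j\<in>{0}. smult (a j) ((pderiv ^^ j) 1))"
    unfolding Dop_def by (intro sum.mono_neutral_right) (auto simp: higher_pderiv_beyond_degree)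
  then have "Dop n a 1 = Dop n a 0"
    using \<open>a 0 = 0\<close> by (simp add: Dop_def)
  then show False
    using assms by (auto dest: inj_onD simp: Pn_def)
qed

theorem mainTheorem7:
  fixes n :: nat and a :: "nat \<Rightarrow> complex" and f :: "complex poly" and \<Omega> :: "complex set"
  assumes "n \<ge> 1"
    and "bij_betw (Dop n a) (Pn n) (Pn n)"
    and "f \<in> Pn n" and "f \<noteq> 0"
    and "circular_domain \<Omega>"
    and "\<forall>k\<in>{1..n}. Zs (Dop n a (phi k)) \<subseteq> \<Omega>"
  shows "Zs (Dop n a f) \<subseteq> setsum_plus (Zs f) \<Omega>"
proof
  fix \<zeta> assume "\<zeta> \<in> Zs (Dop n a f)"
  show "\<zeta> \<in> setsum_plus (Zs f) \<Omega>"
  proof (rule ccontr)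
    assume "\<zeta> \<notin> setsum_plus (Zs f) \<Omega>"
    then have avoid: "\<forall>u. poly f u = 0 \<longrightarrow> \<zeta> - u \<notin> \<Omega>"
      by (force simp: setsum_plus_def Zs_def)
    define d where "d = degree f"
    have "d \<le> n"
      using assms(3) by (simp add: Pn_def d_def)
    have "a 0 \<noteq> 0"
      using bij_betw_imp_inj_on[OF assms(2)] by (rule inj_on_Dop_imp_nonzero_0)
    note H = Dop_phi_nonzero_degree[of a d n, OF this \<open>d \<le> n\<close>]
    have "\<forall>z. poly (Dop n a (phi d)) z = 0 \<longrightarrow> z \<in> \<Omega>"
    proof (cases "d = 0")
      case True
      then show ?thesis
        using H by (auto elim: degree_eq_zeroE)
    next
      case False
      then show ?thesis
        using assms(6) \<open>d \<le> n\<close> by (auto simp: Zs_def)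
    qed
    then have "apolar_form d (Dop n a (phi d)) f \<zeta> \<noteq> 0"
      using apolar_form_nonzero[OF assms(5) H] assms(4) avoid by (simp add: d_def)
    then show False
      using \<open>\<zeta> \<in> Zs (Dop n a f)\<close> apolar_form_Dop_phi[OF d_def[symmetric] \<open>d \<le> n\<close>]
      by (simp add: Zs_def)
  qed
qed

end
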